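(* For $n>4$, the 1-skeleton of the network space $\mathfrak S_n$ is the complete graph on $\delta=2^{n-1}-n-1$ vertices.
   Context: $X$ is a set of $n$ labels. A split of $X$ is an unordered partition of $X$ into two nonempty sets; it is trivial if one part is a singleton. A circular ordering of $X$ is a cyclic arrangement $\pi=(x_1,\dots,x_n)$ up to rotation and reflection; a split is circular w.r.t. $\pi$ if it has the form $\{\{x_{i+1},\dots,x_j\},X\setminus\{x_{i+1},\dots,x_j\}\}$ (indices mod $n$). Give $\mathbb R^\delta$ coordinates indexed by the nontrivial splits. For each circular ordering $\pi$, $O_\pi$ is the set of nonnegative vectors supported on splits circular w.r.t. $\pi$, and the chamber $\Delta_\pi=O_\pi\cap\{\sum_s x_s=1\}$. The network space is $\mathfrak S_n=\bigcup_\pi\Delta_\pi$, a simplicial complex whose simplices are the faces of the chambers; its vertices are the unit vectors of nontrivial splits. *)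

theory Defs
  imports Main
begin

definition is_split :: "'a set \<Rightarrow> 'a set set \<Rightarrow> bool" where
  "is_split X S \<longleftrightarrow> (\<exists>A. A \<subseteq> X \<and> A \<noteq> {} \<and> A \<noteq> X \<and> S = {A, X - A})"

definition nontrivial_split :: "'a set \<Rightarrow> 'a set set \<Rightarrow> bool" where
  "nontrivial_split X S \<longleftrightarrow> is_split X S \<and> (\<forall>A\<in>S. \<not> (\<exists>x. A = {x}))"

text \<open>A circular ordering of X, represented by a list enumerating X once
  (rotations/reflections give the same set of circular splits).\<close>
definition circ_ordering :: "'a set \<Rightarrow> 'a list \<Rightarrow> bool" where
  "circ_ordering X xs \<longleftrightarrow> distinct xs \<and> set xs = X"

text \<open>S is circular w.r.t. xs: one part is a cyclically contiguous block
  {x_{i+1},...,x_j}, i.e. a proper nonempty prefix of a rotation of xs.\<close>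
definition circular_split :: "'a set \<Rightarrow> 'a list \<Rightarrow> 'a set set \<Rightarrow> bool" where
  "circular_split X xs S \<longleftrightarrow>
     (\<exists>r k. 0 < k \<and> k < length xs \<and>
        S = {set (take k (rotate r xs)), X - set (take k (rotate r xs))})"

text \<open>Simplices of the network space: the (nonempty) faces of the chambers,
  recorded by their vertex sets, i.e. nonempty sets of nontrivial splits that
  are all circular w.r.t. one common circular ordering.\<close>
definition network_simplex :: "'a set \<Rightarrow> 'a set set set \<Rightarrow> bool" where
  "network_simplex X \<sigma> \<longleftrightarrow> \<sigma> \<noteq> {} \<and>
     (\<exists>xs. circ_ordering X xs \<and> (\<forall>S\<in>\<sigma>. nontrivial_split X S \<and> circular_split X xs S))"

definition network_vertices :: "'a set \<Rightarrow> 'a set set set" where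
  "network_vertices X = {S. network_simplex X {S}}"

definition network_edges :: "'a set \<Rightarrow> 'a set set set set" where
  "network_edges X = {\<sigma>. network_simplex X \<sigma> \<and> card \<sigma> = 2}"

end

theory Submission
  imports Defs
begin

text \<open>Any two splits {A, X - A} and {B, X - B} are circular for a common ordering: list
  A - B, A \<inter> B, B - A and the rest X - (A \<union> B) consecutively, so that A and B become
  cyclic intervals. Hence every pair of nontrivial splits spans an edge. The vertex count
  follows by normalising each split to its side containing a fixed label x: the sides are
  the 2^(n-1) subsets of X containing x, minus {x}, X and the n - 1 sets X - {y}.\<close>

lemma circular_split_append:
  assumes "ys \<noteq> []" and "zs \<noteq> []"
  shows "circular_split X (ys @ zs) {set ys, X - set ys}"
  unfolding circular_split_def
  using assms by (intro exI[of _ 0] exI[of _ "length ys"]) auto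

lemma circular_split_rotate:
  assumes "circular_split X (rotate r xs) S"
  shows "circular_split X xs S"
proof -
  obtain s k where "0 < k" "k < length xs"
      "S = {set (take k (rotate (s + r) xs)), X - set (take k (rotate (s + r) xs))}"
    using assms unfolding circular_split_def by (auto simp: rotate_rotate)
  then show ?thesis
    unfolding circular_split_def by blast
qed

lemma ex_circ_ordering_both_circular:
  assumes "finite X"
    and A: "A \<subseteq> X" "A \<noteq> {}" "A \<noteq> X"
    and B: "B \<subseteq> X" "B \<noteq> {}" "B \<noteq> X"
  shows "\<exists>xs. circ_ordering X xs \<and> circular_split X xs {A, X - A} \<and> circular_split X xs {B, X - B}"
proof -
  have "finite A" "finite B"
    using assms finite_subset by auto
  obtain l1 where l1: "distinct l1" "set l1 = A - B"
    using finite_distinct_list \<open>finite A\<close> by (meson finite_Diff)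
  obtain l2 where l2: "distinct l2" "set l2 = A \<inter> B"
    using finite_distinct_list \<open>finite A\<close> by (meson finite_Int)
  obtain l3 where l3: "distinct l3" "set l3 = B - A"
    using finite_distinct_list \<open>finite B\<close> by (meson finite_Diff)
  obtain l4 where l4: "distinct l4" "set l4 = X - (A \<union> B)"
    using finite_distinct_list \<open>finite X\<close> by (meson finite_Diff)
  define xs where "xs = l1 @ l2 @ l3 @ l4"
  have "circ_ordering X xs"
    unfolding circ_ordering_def xs_def using l1 l2 l3 l4 A B by auto
  moreover have "circular_split X xs {A, X - A}"
  proof -
    have "set (l1 @ l2) = A" "l1 @ l2 \<noteq> []" "l3 @ l4 \<noteq> []"
      using l1 l2 l3 l4 A by auto
    then show ?thesis
      using circular_split_append[of "l1 @ l2" "l3 @ l4" X] by (simp add: xs_def)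
  qed
  moreover have "circular_split X xs {B, X - B}"
  proof (rule circular_split_rotate)
    have "rotate (length l1) xs = (l2 @ l3) @ (l4 @ l1)"
      unfolding xs_def by (metis append.assoc rotate_append)
    moreover have "set (l2 @ l3) = B" "l2 @ l3 \<noteq> []" "l4 @ l1 \<noteq> []"
      using l1 l2 l3 l4 B by auto
    ultimately show "circular_split X (rotate (length l1) xs) {B, X - B}"
      using circular_split_append[of "l2 @ l3" "l4 @ l1" X] by simp
  qed
  ultimately show ?thesis by blast
qed

lemma obtain_split_side:
  assumes "nontrivial_split X S"
  obtains A where "A \<subseteq> X" "A \<noteq> {}" "A \<noteq> X" "S = {A, X - A}"
  using assms unfolding nontrivial_split_def is_split_def by blast

lemma network_vertices_eq:
  assumes "finite X"
  shows "network_vertices X = {S. nontrivial_split X S}"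
proof (intro equalityI subsetI)
  fix S assume "S \<in> {S. nontrivial_split X S}"
  then have "nontrivial_split X S" by simp
  moreover obtain A where "A \<subseteq> X" "A \<noteq> {}" "A \<noteq> X" "S = {A, X - A}"
    using calculation by (rule obtain_split_side)
  ultimately show "S \<in> network_vertices X"
    using ex_circ_ordering_both_circular[OF assms, of A A]
    unfolding network_vertices_def network_simplex_def by auto
qed (auto simp: network_vertices_def network_simplex_def)

lemma network_edges_complete:
  assumes "finite X"
  shows "network_edges X = {\<sigma>. \<sigma> \<subseteq> network_vertices X \<and> card \<sigma> = 2}"
proof (intro equalityI subsetI)
  fix \<sigma> assume "\<sigma> \<in> {\<sigma>. \<sigma> \<subseteq> network_vertices X \<and> card \<sigma> = 2}"
  then obtain S T where "\<sigma> = {S, T}" "card \<sigma> = 2"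
      and nS: "nontrivial_split X S" and nT: "nontrivial_split X T"
    using network_vertices_eq[OF assms] by (auto simp: card_2_iff)
  moreover obtain A where "A \<subseteq> X" "A \<noteq> {}" "A \<noteq> X" "S = {A, X - A}"
    using nS by (rule obtain_split_side)
  moreover obtain B where "B \<subseteq> X" "B \<noteq> {}" "B \<noteq> X" "T = {B, X - B}"
    using nT by (rule obtain_split_side)
  ultimately show "\<sigma> \<in> network_edges X"
    using ex_circ_ordering_both_circular[OF assms, of A B]
    unfolding network_edges_def network_simplex_def by auto
qed (auto simp: network_edges_def network_vertices_def network_simplex_def)

lemma card_subsets_containing:
  assumes "finite X" and "x \<in> X"
  shows "card {A. A \<subseteq> X \<and> x \<in> A} = 2 ^ (card X - 1)"
proof -
  have "{A. A \<subseteq> X \<and> x \<in> A} = insert x ` Pow (X - {x})"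
    using assms(2) by (auto intro!: image_eqI[of _ "insert x" "_ - {x}"])
  moreover have "inj_on (insert x) (Pow (X - {x}))"
    by (rule inj_onI) (metis Diff_insert_absorb PowD subset_Diff_insert)
  ultimately show ?thesis
    using assms by (simp add: card_image card_Pow)
qed

text \<open>The sides A \<ni> x for which {A, X - A} is not a nontrivial split.\<close>
definition degenerate_sides :: "'a set \<Rightarrow> 'a \<Rightarrow> 'a set set" where
  "degenerate_sides X x = insert {x} (insert X ((\<lambda>y. X - {y}) ` (X - {x})))"

lemma card_degenerate_sides:
  assumes "finite X" and "x \<in> X" and "card X \<ge> 3"
  shows "card (degenerate_sides X x) = card X + 1"
proof -
  have "inj_on (\<lambda>y. X - {y}) (X - {x})"
    by (rule inj_onI) auto
  then have "card ((\<lambda>y. X - {y}) ` (X - {x})) = card X - 1"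
    using assms by (simp add: card_image)
  moreover have "{x} \<noteq> X - {y}" for y
  proof
    assume "{x} = X - {y}"
    then have "card X \<le> card {x, y}"
      by (intro card_mono) auto
    moreover have "card {x, y} \<le> 2"
      by (simp add: card_insert_if)
    ultimately show False
      using assms(3) by simp
  qed
  moreover have "{x} \<noteq> X"
    using assms(3) by auto
  moreover have "X \<notin> (\<lambda>y. X - {y}) ` (X - {x})"
    by auto
  ultimately show ?thesis
    using assms unfolding degenerate_sides_def by (auto simp: card_insert_if)
qed

lemma nontrivial_splits_eq_image:
  assumes "x \<in> X"
  shows "{S. nontrivial_split X S} =
    (\<lambda>A. {A, X - A}) ` ({A. A \<subseteq> X \<and> x \<in> A} - degenerate_sides X x)"
proof (intro equalityI subsetI)
  fix S assume "S \<in> {S. nontrivial_split X S}"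
  then have nt: "nontrivial_split X S" by simp
  then obtain A where A: "A \<subseteq> X" "A \<noteq> {}" "A \<noteq> X" "S = {A, X - A}"
    by (rule obtain_split_side)
  have no_singleton: "\<forall>C\<in>S. \<nexists>y. C = {y}"
    using nt unfolding nontrivial_split_def by blast
  have "S = {C, X - C}" and "C \<in> {A. A \<subseteq> X \<and> x \<in> A} - degenerate_sides X x"
    if "C \<in> S" "x \<in> C" for C
  proof -
    have "X - C \<in> S"
      using A that(1) by (auto simp: double_diff)
    then show "S = {C, X - C}" "C \<in> {A. A \<subseteq> X \<and> x \<in> A} - degenerate_sides X x"
      using A that no_singleton unfolding degenerate_sides_def
      by (auto simp: double_diff)
  qed
  moreover have "\<exists>C\<in>S. x \<in> C"
    using A assms by blast
  ultimately show "S \<in> (\<lambda>A. {A, X - A}) ` ({A. A \<subseteq> X \<and> x \<in> A} - degenerate_sides X x)"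
    by blast
next
  fix S assume "S \<in> (\<lambda>A. {A, X - A}) ` ({A. A \<subseteq> X \<and> x \<in> A} - degenerate_sides X x)"
  then obtain A where "A \<subseteq> X" "x \<in> A" "A \<notin> degenerate_sides X x" "S = {A, X - A}"
    by blast
  then show "S \<in> {S. nontrivial_split X S}"
    unfolding degenerate_sides_def nontrivial_split_def is_split_def
    by (auto simp: double_diff)
qed

lemma card_nontrivial_splits:
  assumes "finite X" and "card X \<ge> 3"
  shows "card {S. nontrivial_split X S} = 2 ^ (card X - 1) - card X - 1"
proof -
  obtain x where x: "x \<in> X"
    using assms by fastforce
  let ?sides = "{A. A \<subseteq> X \<and> x \<in> A} - degenerate_sides X x"
  have "inj_on (\<lambda>A. {A, X - A}) ?sides"
    by (rule inj_onI) (metis (no_types, lifting) Diff_iff doubleton_eq_iff mem_Collect_eq)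
  then have "card {S. nontrivial_split X S} = card ?sides"
    using nontrivial_splits_eq_image[OF x] by (simp add: card_image)
  also have "\<dots> = card {A. A \<subseteq> X \<and> x \<in> A} - card (degenerate_sides X x)"
    using x assms(1) by (intro card_Diff_subset) (auto simp: degenerate_sides_def)
  finally show ?thesis
    using card_subsets_containing[OF assms(1) x] card_degenerate_sides[OF assms(1) x assms(2)]
    by simp
qed

theorem corollary8:
  fixes X :: "'a set"
  assumes "finite X" and "card X > 4"
  shows "network_edges X = {\<sigma>. \<sigma> \<subseteq> network_vertices X \<and> card \<sigma> = 2}
       \<and> card (network_vertices X) = 2 ^ (card X - 1) - card X - 1"
  using network_edges_complete[OF assms(1)] network_vertices_eq[OF assms(1)]
    card_nontrivial_splits[OF assms(1)] assms(2)
  by simp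

end
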